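(* Let $\mathbb{K}\in\{\mathbb{R},\mathbb{C}\}$, set $c_{\mathbb{K}}=1$ if $\mathbb{K}=\mathbb{R}$ and $c_{\mathbb{K}}=2$ if $\mathbb{K}=\mathbb{C}$, let $d\ge 2$, and let $x_1,\dots,x_N\in\mathbb{K}^d\setminus\{0\}$. Let $\mathcal{HP}_d^+(\mathbb{K})$ be the set of positive definite (symmetric if $\mathbb{K}=\mathbb{R}$, Hermitian if $\mathbb{K}=\mathbb{C}$) $d\times d$ matrices of unit determinant, and define on it $$l(R)=-c_{\mathbb{K}}\,\frac{d-1}{2N}\sum_{n=1}^N \log\left(x_n^\dagger R^{-1}x_n\right).$$ If $R^\star\in\mathcal{HP}_d^+(\mathbb{K})$ maximizes $l$ over $\mathcal{HP}_d^+(\mathbb{K})$, then there exists a constant $c>0$ such that $$R^\star = c\sum_{n=1}^N \frac{x_n x_n^\dagger}{x_n^\dagger (R^\star)^{-1} x_n},$$ i.e. $R^\star$ is (a normalized version of) Tyler's fixed-point estimator. In the paper's interpretation, $l$ is, up to additive constants, the log-likelihood of $N$ i.i.d. samples under a real elliptically symmetric model (resp. a complex elliptically symmetric model, with the samples' circular symmetry taken into account) with correlation matrix $R$, maximized over all radial distributions; hence Tyler's estimator is a maximum likelihood estimate of the correlation matrix over all such models.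
   Context: $X^\dagger$ denotes the transpose of a real matrix/vector or the conjugate transpose of a complex one. A (real) elliptically symmetric distribution on $\mathbb{R}^d$ with correlation matrix $R$ (normalized by $|R|=1$) and radial distribution $Q$ (any probability measure on $\mathbb{R}_+$) is the law of $L(R)\,r\,u$ where $R=L(R)L(R)^\dagger$ is the Cholesky factorization, $r\sim Q$ and $u$ is independent of $r$ and uniform on the unit sphere of $\mathbb{R}^d$; complex elliptically symmetric distributions are defined identically on $\mathbb{C}^d$ with $u$ uniform on the unit sphere of $\mathbb{C}^d$. The paper defines the log-likelihood of a model $P$ for a sampling distribution $S$ as $-H(S|P)$ (minus the KL divergence), with a single sample $x_0$ represented by the Dirac mass at $x_0$ (in the complex case, by the Dirac mass on the phase orbit $\{ux_0: |u|=1\}$ averaged uniformly over phases), and derives that after maximizing over $Q$ the likelihood reduces, up to additive constants, to $l(R)$ above. *)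

theory Defs
  imports "HOL-Analysis.Analysis"
begin

definition HP_real :: "(real^'n^'n) set" where
  "HP_real = {R. transpose R = R \<and> (\<forall>v. v \<noteq> 0 \<longrightarrow> v \<bullet> (R *v v) > 0) \<and> det R = 1}"

definition quad_real :: "real^'n^'n \<Rightarrow> real^'n \<Rightarrow> real" where
  "quad_real R v = v \<bullet> (matrix_inv R *v v)"

definition outer_real :: "real^'n \<Rightarrow> real^'n^'n" where
  "outer_real v = (\<chi> i j. v $ i * v $ j)"

definition l_real :: "nat \<Rightarrow> (nat \<Rightarrow> real^'n) \<Rightarrow> real^'n^'n \<Rightarrow> real" where
  "l_real N x R = - 1 * (real CARD('n) - 1) / (2 * real N) * (\<Sum>n<N. ln (quad_real R (x n)))"

definition cadj :: "complex^'n^'m \<Rightarrow> complex^'m^'n" where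
  "cadj A = (\<chi> i j. cnj (A $ j $ i))"

definition cdot :: "complex^'n \<Rightarrow> complex^'n \<Rightarrow> complex" where
  "cdot v w = (\<Sum>i\<in>UNIV. cnj (v $ i) * w $ i)"

definition HP_complex :: "(complex^'n^'n) set" where
  "HP_complex = {R. cadj R = R \<and>
     (\<forall>v. v \<noteq> 0 \<longrightarrow> Im (cdot v (R *v v)) = 0 \<and> Re (cdot v (R *v v)) > 0) \<and> det R = 1}"

text \<open>x^dagger R^{-1} x (a positive real number for R in HP_complex, x nonzero).\<close>
definition quad_complex :: "complex^'n^'n \<Rightarrow> complex^'n \<Rightarrow> real" where
  "quad_complex R v = Re (cdot v (matrix_inv R *v v))"

definition outer_complex :: "complex^'n \<Rightarrow> complex^'n^'n" where
  "outer_complex v = (\<chi> i j. v $ i * cnj (v $ j))"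

definition l_complex :: "nat \<Rightarrow> (nat \<Rightarrow> complex^'n) \<Rightarrow> complex^'n^'n \<Rightarrow> real" where
  "l_complex N x R = - 2 * (real CARD('n) - 1) / (2 * real N) * (\<Sum>n<N. ln (quad_complex R (x n)))"

end

theory Submission
  imports Defs
begin

text \<open>For a unimodular \<open>F\<close>, the matrix \<open>(F\<^sup>\<dagger> R\<^sup>-\<^sup>1 F)\<^sup>-\<^sup>1\<close> again lies in \<open>HP\<^sub>d\<^sup>+\<close>, and its
  quadratic forms at the samples are those of \<open>R\<close> at \<open>F x\<^sub>n\<close>. As the factor in front of the sum in
  \<open>l\<close> is negative (here \<open>d \<ge> 2\<close> is used), a maximizer \<open>R\<^sup>\<star>\<close> makes
  \<open>t \<mapsto> \<Sum>\<^sub>n log ((F\<^sub>t x\<^sub>n)\<^sup>\<dagger> R\<^sup>\<star>\<^sup>-\<^sup>1 F\<^sub>t x\<^sub>n)\<close> minimal at \<open>t = 0\<close> for every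
  smooth curve of unimodular matrices with \<open>F\<^sub>0 = I\<close>. For the elementary shears \<open>I + t E\<^sub>i\<^sub>j\<close> and the
  squeezes \<open>diag(1 + t, 1/(1 + t))\<close> on two coordinates the vanishing derivative says that
  \<open>M R\<^sup>\<star>\<^sup>-\<^sup>1\<close>, with \<open>M = \<Sum>\<^sub>n x\<^sub>n x\<^sub>n\<^sup>\<dagger> / (x\<^sub>n\<^sup>\<dagger> R\<^sup>\<star>\<^sup>-\<^sup>1 x\<^sub>n)\<close>, has vanishing
  off-diagonal and constant diagonal entries. Its trace is \<open>N\<close>, so \<open>M = (N/d) R\<^sup>\<star>\<close>.\<close>

lemma matrix_mul_matrix_inv:
  fixes A :: "'a::field^'n^'n"
  assumes "invertible A"
  shows "A ** matrix_inv A = mat 1" "matrix_inv A ** A = mat 1"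
proof -
  have "\<exists>A'. A ** A' = mat 1 \<and> A' ** A = mat 1" using assms unfolding invertible_def by blast
  hence "A ** matrix_inv A = mat 1 \<and> matrix_inv A ** A = mat 1"
    unfolding matrix_inv_def by (rule someI_ex)
  thus "A ** matrix_inv A = mat 1" "matrix_inv A ** A = mat 1" by auto
qed

lemma matrix_inv_unique:
  fixes A B :: "'a::field^'n^'n"
  assumes "invertible A" "B ** A = mat 1"
  shows "matrix_inv A = B"
proof -
  have "B = B ** (A ** matrix_inv A)" using matrix_mul_matrix_inv(1)[OF assms(1)] by simp
  also have "\<dots> = matrix_inv A" by (simp add: matrix_mul_assoc assms(2))
  finally show ?thesis by simp
qed

lemma invertible_matrix_inv:
  fixes A :: "'a::field^'n^'n"
  assumes "invertible A" shows "invertible (matrix_inv A)"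
  using matrix_mul_matrix_inv[OF assms] unfolding invertible_def by blast

lemma matrix_inv_inv:
  fixes A :: "'a::field^'n^'n"
  assumes "invertible A" shows "matrix_inv (matrix_inv A) = A"
  by (rule matrix_inv_unique[OF invertible_matrix_inv[OF assms] matrix_mul_matrix_inv(1)[OF assms]])

lemma det_matrix_inv:
  fixes A :: "'a::field^'n^'n"
  assumes "invertible A" shows "det (matrix_inv A) = 1 / det A"
proof -
  have "det A * det (matrix_inv A) = 1"
    using matrix_mul_matrix_inv(1)[OF assms] by (metis det_I det_mul)
  moreover have "det A \<noteq> 0" using assms invertible_det_nz by blast
  ultimately show ?thesis by (simp add: field_simps)
qed

lemma matrix_vector_mul_matrix_inv:
  fixes A :: "'a::field^'n^'n"
  assumes "invertible A"
  shows "A *v (matrix_inv A *v v) = v" "matrix_inv A *v (A *v v) = v"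
  using matrix_mul_matrix_inv[OF assms] by (simp_all add: matrix_vector_mul_assoc)

lemma invertible_if_kernel_trivial:
  fixes A :: "'a::field^'n^'n"
  assumes "\<And>v. A *v v = 0 \<Longrightarrow> v = 0" shows "invertible A"
  using assms matrix_left_invertible_ker invertible_left_inverse by blast

lemma mat_of_real_mult:
  "mat (of_real c) ** (B :: 'a::real_algebra_1^'n^'m) = c *\<^sub>R B"
proof -
  have "(\<Sum>l\<in>UNIV. (if k = l then of_real c else 0) * B $ l $ m) = c *\<^sub>R B $ k $ m" for k m
    by (simp add: if_distrib[of "\<lambda>z. z * _"] sum.delta scaleR_conv_of_real cong: if_cong)
  thus ?thesis by (simp add: vec_eq_iff matrix_matrix_mult_def mat_def)
qed

lemma scalar_matrix_eq_mat_trace: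
  fixes A :: "'a::field_char_0^'n^'n"
  assumes "\<And>j k. j \<noteq> k \<Longrightarrow> A $ j $ k = 0" and "\<And>j k. A $ j $ j = A $ k $ k"
  shows "A = mat (trace A / of_nat CARD('n))"
proof -
  have "trace A = (\<Sum>k\<in>(UNIV :: 'n set). A $ i $ i)" for i
    unfolding trace_def by (rule sum.cong) (simp_all add: assms(2))
  hence "A $ i $ i = trace A / of_nat CARD('n)" for i by (simp add: eq_divide_eq mult.commute)
  thus ?thesis using assms(1) by (auto simp: vec_eq_iff mat_def)
qed

definition shear_matrix :: "'n \<Rightarrow> 'n \<Rightarrow> 'a \<Rightarrow> 'a::comm_ring_1^'n^'n" where
  "shear_matrix i j c = (\<chi> k l. (if k = l then 1 else 0) + (if k = i \<and> l = j then c else 0))"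

definition squeeze_matrix :: "'n \<Rightarrow> 'n \<Rightarrow> 'a \<Rightarrow> 'a::field^'n^'n" where
  "squeeze_matrix i j c = (\<chi> k l. if k = l then (if k = i then c else if k = j then 1 / c else 1) else 0)"

lemma det_shear_matrix:
  assumes "i \<noteq> j" shows "det (shear_matrix i j c) = 1"
proof -
  have "shear_matrix i j c = (\<chi> k. if k = i then row i (mat 1) + c *s row j (mat 1) else row k (mat 1))"
    using assms by (auto simp: vec_eq_iff row_def mat_def shear_matrix_def)
  thus ?thesis using det_row_operation[OF assms, of "mat 1" c] by simp
qed

lemma shear_matrix_mult_vector:
  "shear_matrix i j c *v v = v + c *s ((v $ j) *s axis i 1)"
proof -
  have "(\<Sum>l\<in>UNIV. ((if k = l then 1 else 0) + (if k = i \<and> l = j then c else 0)) * v $ l)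
     = v $ k + (if k = i then c * v $ j else 0)" for k
    by (simp add: distrib_right sum.distrib if_distrib[of "\<lambda>z. z * _"] sum.delta cong: if_cong)
  thus ?thesis by (simp add: vec_eq_iff matrix_vector_mult_def axis_def shear_matrix_def)
qed

lemma det_squeeze_matrix:
  assumes "i \<noteq> j" "c \<noteq> 0" shows "det (squeeze_matrix i j c) = 1"
proof -
  let ?d = "\<lambda>k. if k = i then c else if k = j then 1 / c else 1"
  have "det (squeeze_matrix i j c) = (\<Prod>k\<in>UNIV. ?d k)"
    unfolding squeeze_matrix_def by (subst det_diagonal) auto
  also have "\<dots> = c * (1 / c) * (\<Prod>k\<in>UNIV - {i} - {j}. ?d k)"
    using assms by (simp add: prod.remove[of UNIV i] prod.remove[of "UNIV - {i}" j])
  also have "(\<Prod>k\<in>UNIV - {i} - {j}. ?d k) = 1"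
    by (rule prod.neutral) auto
  finally show ?thesis using assms by simp
qed

lemma squeeze_matrix_mult_vector:
  assumes "i \<noteq> j"
  shows "squeeze_matrix i j c *v v = v + (c - 1) *s ((v $ i) *s axis i 1) + (1 / c - 1) *s ((v $ j) *s axis j 1)"
proof -
  have "(\<Sum>l\<in>UNIV. (if k = l then (if k = i then c else if k = j then 1 / c else 1) else 0) * v $ l)
     = v $ k + (if k = i then (c - 1) * v $ i else 0) + (if k = j then (1 / c - 1) * v $ j else 0)" for k
  proof -
    have e: "(\<lambda>l. (if k = l then (if k = i then c else if k = j then 1 / c else 1) else 0) * v $ l)
      = (\<lambda>l. if k = l then (if k = i then c else if k = j then 1 / c else 1) * v $ l else 0)"
      by auto
    show ?thesis unfolding e using assms by (simp add: sum.delta algebra_simps)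
  qed
  thus ?thesis by (simp add: vec_eq_iff matrix_vector_mult_def axis_def squeeze_matrix_def)
qed

section \<open>The real case\<close>

definition sym_pos_def :: "real^'n^'n \<Rightarrow> bool" where
  "sym_pos_def A \<longleftrightarrow> transpose A = A \<and> (\<forall>v. v \<noteq> 0 \<longrightarrow> v \<bullet> (A *v v) > 0)"

lemma HP_real_iff: "R \<in> HP_real \<longleftrightarrow> sym_pos_def R \<and> det R = 1"
  unfolding HP_real_def sym_pos_def_def by auto

lemma inner_matrix_vector_symmetric:
  fixes A :: "real^'n^'n"
  assumes "transpose A = A"
  shows "u \<bullet> (A *v w) = w \<bullet> (A *v u)"
  by (metis assms dot_lmul_matrix inner_commute vector_transpose_matrix)

lemma sym_pos_def_invertible: "sym_pos_def A \<Longrightarrow> invertible A"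
  unfolding sym_pos_def_def by (metis invertible_if_kernel_trivial inner_zero_right less_irrefl)

lemma sym_pos_def_matrix_inv:
  assumes "sym_pos_def A" shows "sym_pos_def (matrix_inv A)"
proof -
  have iA: "invertible A" using sym_pos_def_invertible assms by blast
  have "transpose (matrix_inv A) ** A = mat 1"
    using assms unfolding sym_pos_def_def
    by (metis matrix_mul_matrix_inv(1)[OF iA] matrix_transpose_mul transpose_mat)
  hence symm: "transpose (matrix_inv A) = matrix_inv A" using matrix_inv_unique[OF iA] by metis
  have "v \<bullet> (matrix_inv A *v v) > 0" if "v \<noteq> 0" for v
  proof -
    define w where "w = matrix_inv A *v v"
    have v: "A *v w = v" unfolding w_def by (rule matrix_vector_mul_matrix_inv(1)[OF iA])
    hence "w \<noteq> 0" using that by auto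
    hence "w \<bullet> (A *v w) > 0" using assms sym_pos_def_def by blast
    thus ?thesis using v unfolding w_def by (simp add: inner_commute)
  qed
  thus ?thesis using symm sym_pos_def_def by blast
qed

lemma HP_real_unimodular_congruence:
  fixes R F :: "real^'n^'n"
  assumes R: "R \<in> HP_real" and F: "det F = 1"
  defines "R' \<equiv> matrix_inv (transpose F ** matrix_inv R ** F)"
  shows "R' \<in> HP_real" "quad_real R' v = (F *v v) \<bullet> (matrix_inv R *v (F *v v))"
proof -
  define S where "S = matrix_inv R"
  have iR: "invertible R" using R sym_pos_def_invertible by (auto simp: HP_real_iff)
  have S: "sym_pos_def S" "det S = 1"
    using sym_pos_def_matrix_inv det_matrix_inv[OF iR] R unfolding S_def by (auto simp: HP_real_iff)
  have iF: "invertible F" using F by (simp add: invertible_det_nz)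
  define T where "T = transpose F ** S ** F"
  have T_form: "u \<bullet> (T *v u) = (F *v u) \<bullet> (S *v (F *v u))" for u
  proof -
    have "T *v u = transpose F *v (S *v (F *v u))"
      unfolding T_def by (simp add: matrix_vector_mul_assoc matrix_mul_assoc)
    moreover have "u \<bullet> (transpose F *v w) = (F *v u) \<bullet> w" for w
      by (metis dot_lmul_matrix transpose_transpose vector_transpose_matrix)
    ultimately show ?thesis by simp
  qed
  have "sym_pos_def T"
    unfolding sym_pos_def_def
  proof (intro conjI allI impI)
    show "transpose T = T" using S unfolding T_def sym_pos_def_def
      by (simp add: matrix_transpose_mul matrix_mul_assoc)
    fix u :: "real^'n" assume "u \<noteq> 0"
    hence "F *v u \<noteq> 0" using matrix_vector_mul_matrix_inv(2)[OF iF, of u] by auto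
    thus "u \<bullet> (T *v u) > 0" using S sym_pos_def_def T_form by auto
  qed
  moreover have "det T = 1" unfolding T_def by (simp add: det_mul F S)
  moreover have iT: "invertible T" using sym_pos_def_invertible \<open>sym_pos_def T\<close> by blast
  moreover have "R' = matrix_inv T" unfolding R'_def T_def S_def ..
  ultimately show "R' \<in> HP_real"
    by (simp add: HP_real_iff sym_pos_def_matrix_inv det_matrix_inv)
  show "quad_real R' v = (F *v v) \<bullet> (matrix_inv R *v (F *v v))"
    unfolding quad_real_def \<open>R' = matrix_inv T\<close> matrix_inv_inv[OF iT] T_form S_def ..
qed

lemma HP_real_maximizer_minimizes_log_sum:
  fixes x :: "nat \<Rightarrow> real^'n"
  assumes R: "R \<in> HP_real" and opt: "\<forall>R'\<in>HP_real. l_real N x R' \<le> l_real N x R"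
    and "CARD('n) \<ge> 2" "N \<ge> 1" and "det F = 1"
  shows "(\<Sum>n<N. ln (quad_real R (x n))) \<le> (\<Sum>n<N. ln ((F *v x n) \<bullet> (matrix_inv R *v (F *v x n))))"
proof -
  define R' where "R' = matrix_inv (transpose F ** matrix_inv R ** F)"
  have "- 1 * (real CARD('n) - 1) / (2 * real N) < 0" using assms by (simp add: divide_neg_pos)
  moreover have "l_real N x R' \<le> l_real N x R"
    using opt HP_real_unimodular_congruence(1)[OF R \<open>det F = 1\<close>] unfolding R'_def by blast
  ultimately show ?thesis
    using HP_real_unimodular_congruence(2)[OF R \<open>det F = 1\<close>]
    unfolding l_real_def R'_def mult_le_cancel_left by simp
qed

lemma HP_real_first_order_condition:
  fixes x a b :: "nat \<Rightarrow> real^'n" and F :: "real \<Rightarrow> real^'n^'n" and \<alpha> \<beta> :: "real \<Rightarrow> real"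
  assumes R: "R \<in> HP_real" and opt: "\<forall>R'\<in>HP_real. l_real N x R' \<le> l_real N x R"
    and d: "CARD('n) \<ge> 2" and N: "N \<ge> 1" and x: "\<forall>n<N. x n \<noteq> 0"
    and \<delta>: "\<delta> > 0" and F_det: "\<And>t. \<bar>t\<bar> < \<delta> \<Longrightarrow> det (F t) = 1"
    and F_x: "\<And>t n. \<bar>t\<bar> < \<delta> \<Longrightarrow> F t *v x n = x n + \<alpha> t *\<^sub>R a n + \<beta> t *\<^sub>R b n"
    and \<alpha>: "(\<alpha> has_real_derivative \<alpha>') (at 0)" "\<alpha> 0 = 0"
    and \<beta>: "(\<beta> has_real_derivative \<beta>') (at 0)" "\<beta> 0 = 0"
  shows "(\<Sum>n<N. (\<alpha>' * (a n \<bullet> (matrix_inv R *v x n)) + \<beta>' * (b n \<bullet> (matrix_inv R *v x n)))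
            / quad_real R (x n)) = 0"
proof -
  define S where "S = matrix_inv R"
  have S: "sym_pos_def S" using R sym_pos_def_matrix_inv unfolding S_def by (auto simp: HP_real_iff)
  hence symm: "u \<bullet> (S *v w) = w \<bullet> (S *v u)" for u w
    using inner_matrix_vector_symmetric sym_pos_def_def by blast
  define q where "q n = quad_real R (x n)" for n
  have q_pos: "q n > 0" if "n < N" for n
    using x that S unfolding q_def quad_real_def S_def sym_pos_def_def by auto
  define h where "h n t = (x n + \<alpha> t *\<^sub>R a n + \<beta> t *\<^sub>R b n) \<bullet> (S *v (x n + \<alpha> t *\<^sub>R a n + \<beta> t *\<^sub>R b n))"
    for n t
  have h_expand: "h n = (\<lambda>t. q n + 2 * \<alpha> t * (a n \<bullet> (S *v x n)) + 2 * \<beta> t * (b n \<bullet> (S *v x n))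
      + (\<alpha> t)\<^sup>2 * (a n \<bullet> (S *v a n)) + 2 * \<alpha> t * \<beta> t * (a n \<bullet> (S *v b n)) + (\<beta> t)\<^sup>2 * (b n \<bullet> (S *v b n)))"
    for n
    unfolding h_def q_def quad_real_def S_def[symmetric]
    by (simp add: fun_eq_iff inner_add_left inner_add_right matrix_vector_right_distrib
        matrix_vector_mult_scaleR symm[of "x n" "a n"] symm[of "x n" "b n"] symm[of "b n" "a n"] algebra_simps power2_eq_square)
  have min: "(\<Sum>n<N. ln (h n 0)) \<le> (\<Sum>n<N. ln (h n t))" if "\<bar>0 - t\<bar> < \<delta>" for t
    using HP_real_maximizer_minimizes_log_sum[OF R opt d N F_det] F_x that
    by (simp add: h_expand \<alpha>(2) \<beta>(2) flip: h_def S_def q_def)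
  have h_0: "h n 0 = q n" for n by (simp add: h_expand \<alpha>(2) \<beta>(2))
  have "(h n has_real_derivative 2 * \<alpha>' * (a n \<bullet> (S *v x n)) + 2 * \<beta>' * (b n \<bullet> (S *v x n))) (at 0)" for n
    unfolding h_expand by (rule derivative_eq_intros \<alpha>(1) \<beta>(1) refl | simp add: \<alpha>(2) \<beta>(2))+
  hence "((\<lambda>t. \<Sum>n<N. ln (h n t)) has_real_derivative
      (\<Sum>n<N. (2 * \<alpha>' * (a n \<bullet> (S *v x n)) + 2 * \<beta>' * (b n \<bullet> (S *v x n))) / q n)) (at 0)"
    by (intro DERIV_sum) (rule derivative_eq_intros | assumption | simp add: h_0 q_pos)+
  with DERIV_local_min \<delta> min
  have "(\<Sum>n<N. (2 * \<alpha>' * (a n \<bullet> (S *v x n)) + 2 * \<beta>' * (b n \<bullet> (S *v x n))) / q n) = 0"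
    by blast
  hence "2 * (\<Sum>n<N. (\<alpha>' * (a n \<bullet> (S *v x n)) + \<beta>' * (b n \<bullet> (S *v x n))) / q n) = 0"
    by (simp add: sum_distrib_left algebra_simps add_divide_distrib)
  thus ?thesis unfolding q_def S_def by simp
qed

lemma HP_real_maximizer_shear_condition:
  fixes x :: "nat \<Rightarrow> real^'n"
  assumes R: "R \<in> HP_real" and opt: "\<forall>R'\<in>HP_real. l_real N x R' \<le> l_real N x R"
    and d: "CARD('n) \<ge> 2" and N: "N \<ge> 1" and x: "\<forall>n<N. x n \<noteq> 0" and "i \<noteq> j"
  shows "(\<Sum>n<N. x n $ j * (matrix_inv R *v x n) $ i / quad_real R (x n)) = 0"
proof -
  have "(\<Sum>n<N. (1 * (((x n $ j) *\<^sub>R axis i 1) \<bullet> (matrix_inv R *v x n)) + 0 * (0 \<bullet> (matrix_inv R *v x n)))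
          / quad_real R (x n)) = 0"
  proof (rule HP_real_first_order_condition[OF R opt d N x, where \<delta> = 1 and F = "shear_matrix i j"])
    fix t :: real and n
    show "det (shear_matrix i j t) = 1" using \<open>i \<noteq> j\<close> by (rule det_shear_matrix)
    show "shear_matrix i j t *v x n = x n + t *\<^sub>R ((x n $ j) *\<^sub>R axis i 1) + 0 *\<^sub>R 0"
      by (simp add: shear_matrix_mult_vector scalar_mult_eq_scaleR)
  qed (auto intro: derivative_eq_intros)
  thus ?thesis by (simp add: inner_axis')
qed

lemma HP_real_maximizer_squeeze_condition:
  fixes x :: "nat \<Rightarrow> real^'n"
  assumes R: "R \<in> HP_real" and opt: "\<forall>R'\<in>HP_real. l_real N x R' \<le> l_real N x R"
    and d: "CARD('n) \<ge> 2" and N: "N \<ge> 1" and x: "\<forall>n<N. x n \<noteq> 0" and ij: "i \<noteq> j"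
  shows "(\<Sum>n<N. (x n $ i * (matrix_inv R *v x n) $ i - x n $ j * (matrix_inv R *v x n) $ j)
           / quad_real R (x n)) = 0"
proof -
  have "(\<Sum>n<N. (1 * (((x n $ i) *\<^sub>R axis i 1) \<bullet> (matrix_inv R *v x n))
                 + (-1) * (((x n $ j) *\<^sub>R axis j 1) \<bullet> (matrix_inv R *v x n))) / quad_real R (x n)) = 0"
  proof (rule HP_real_first_order_condition[OF R opt d N x,
        where \<delta> = "1/2" and F = "\<lambda>t. squeeze_matrix i j (1 + t)" and \<beta> = "\<lambda>t. 1 / (1 + t) - 1"])
    fix t :: real and n assume "\<bar>t\<bar> < 1/2"
    hence "1 + t \<noteq> 0" by auto
    thus "det (squeeze_matrix i j (1 + t)) = 1" by (rule det_squeeze_matrix[OF ij])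
    show "squeeze_matrix i j (1 + t) *v x n
        = x n + t *\<^sub>R (x n $ i *\<^sub>R axis i 1) + (1 / (1 + t) - 1) *\<^sub>R (x n $ j *\<^sub>R axis j 1)"
      by (simp add: squeeze_matrix_mult_vector[OF ij] scalar_mult_eq_scaleR)
  next
    show "((\<lambda>t::real. 1 / (1 + t) - 1) has_real_derivative -1) (at 0)"
      by (rule derivative_eq_intros refl | simp)+
  qed (auto intro: derivative_eq_intros)
  thus ?thesis by (simp add: inner_axis' diff_divide_distrib)
qed

lemma tyler_sum_mult_symmetric:
  fixes x :: "nat \<Rightarrow> real^'n" and S :: "real^'n^'n"
  assumes "transpose S = S"
  shows "((\<Sum>n<N. (1 / q n) *\<^sub>R outer_real (x n)) ** S) $ j $ k = (\<Sum>n<N. x n $ j * (S *v x n) $ k / q n)"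
proof -
  have S: "S $ l $ k = S $ k $ l" for l by (metis assms transpose_def vec_lambda_beta)
  have "((\<Sum>n<N. (1 / q n) *\<^sub>R outer_real (x n)) ** S) $ j $ k
      = (\<Sum>l\<in>UNIV. \<Sum>n<N. (1 / q n) * (x n $ j * x n $ l) * S $ k $ l)"
    by (simp add: matrix_matrix_mult_def outer_real_def sum_distrib_right S)
  also have "\<dots> = (\<Sum>n<N. x n $ j * (S *v x n) $ k / q n)"
    by (subst sum.swap, rule sum.cong)
      (simp_all add: matrix_vector_mult_def sum_distrib_left sum_divide_distrib mult_ac)
  finally show ?thesis .
qed

theorem tyler_fixed_point_real:
  fixes x :: "nat \<Rightarrow> real^'n"
  assumes R: "R \<in> HP_real" and opt: "\<forall>R'\<in>HP_real. l_real N x R' \<le> l_real N x R"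
    and d: "CARD('n) \<ge> 2" and N: "N \<ge> 1" and x: "\<forall>n<N. x n \<noteq> 0"
  shows "R = (real CARD('n) / real N) *\<^sub>R (\<Sum>n<N. (1 / quad_real R (x n)) *\<^sub>R outer_real (x n))"
proof -
  define S where "S = matrix_inv R"
  have iR: "invertible R" using R sym_pos_def_invertible by (auto simp: HP_real_iff)
  have S: "sym_pos_def S" using R sym_pos_def_matrix_inv unfolding S_def by (auto simp: HP_real_iff)
  define M where "M = (\<Sum>n<N. (1 / quad_real R (x n)) *\<^sub>R outer_real (x n))"
  have MS: "(M ** S) $ j $ k = (\<Sum>n<N. x n $ j * (S *v x n) $ k / quad_real R (x n))" for j k
    unfolding M_def using S by (simp add: tyler_sum_mult_symmetric sym_pos_def_def)
  have "(M ** S) $ j $ k = 0" if "j \<noteq> k" for j k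
    using HP_real_maximizer_shear_condition[OF R opt d N x that[symmetric]] by (simp add: MS flip: S_def)
  moreover have "(M ** S) $ j $ j = (M ** S) $ k $ k" for j k
  proof (cases "j = k")
    case False
    thus ?thesis using HP_real_maximizer_squeeze_condition[OF R opt d N x False]
      by (simp add: MS diff_divide_distrib sum_subtractf flip: S_def)
  qed simp
  ultimately have "M ** S = mat (trace (M ** S) / real CARD('n))"
    by (rule scalar_matrix_eq_mat_trace)
  also have "trace (M ** S) = (\<Sum>n<N. (x n \<bullet> (S *v x n)) / quad_real R (x n))"
    unfolding trace_def MS by (subst sum.swap) (simp add: sum_divide_distrib inner_vec_def)
  also have "\<dots> = real N"
    using x S by (subst sum.cong[of _ _ _ "\<lambda>_. 1"]) (auto simp: quad_real_def sym_pos_def_def simp flip: S_def)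
  finally have "M ** S = mat (real N / real CARD('n))" .
  hence "M = (real N / real CARD('n)) *\<^sub>R R"
    using mat_of_real_mult[of "real N / real CARD('n)" R] matrix_mul_matrix_inv(2)[OF iR]
    by (metis S_def matrix_mul_assoc matrix_mul_rid of_real_eq_id id_apply)
  thus ?thesis using N unfolding M_def by simp
qed

section \<open>The complex case\<close>

lemma cdot_commute: "cdot u v = cnj (cdot v u)"
  unfolding cdot_def by (simp add: cnj_sum mult.commute)

lemma cdot_add_right: "cdot u (v + w) = cdot u v + cdot u w"
  unfolding cdot_def by (simp add: distrib_left sum.distrib)

lemma cdot_add_left: "cdot (u + v) w = cdot u w + cdot v w"
  unfolding cdot_def by (simp add: distrib_right sum.distrib)

lemma cdot_scale_right: "cdot u (c *s v) = c * cdot u v"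
  unfolding cdot_def by (simp add: sum_distrib_left mult_ac)

lemma cdot_scale_left: "cdot (c *s u) v = cnj c * cdot u v"
  unfolding cdot_def by (simp add: sum_distrib_left mult_ac)

lemma cdot_zero_right [simp]: "cdot u 0 = 0"
  unfolding cdot_def by simp

lemma cdot_axis: "cdot (c *s axis i 1) u = cnj c * u $ i"
proof -
  have "cdot (c *s axis i 1) u = (\<Sum>k\<in>UNIV. if k = i then cnj c * u $ k else 0)"
    unfolding cdot_def by (intro sum.cong) (auto simp: axis_def)
  thus ?thesis by (simp add: sum.delta')
qed

lemma cdot_cadj: "cdot u (cadj A *v w) = cdot (A *v u) w"
proof -
  have "cdot u (cadj A *v w) = (\<Sum>i\<in>UNIV. \<Sum>l\<in>UNIV. cnj (u $ i) * (cnj (A $ l $ i) * w $ l))"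
    unfolding cdot_def cadj_def matrix_vector_mult_def by (simp add: sum_distrib_left)
  also have "\<dots> = (\<Sum>l\<in>UNIV. \<Sum>i\<in>UNIV. cnj (u $ i) * (cnj (A $ l $ i) * w $ l))" by (rule sum.swap)
  also have "\<dots> = cdot (A *v u) w"
    unfolding cdot_def matrix_vector_mult_def by (simp add: cnj_sum sum_distrib_right sum_distrib_left mult_ac)
  finally show ?thesis .
qed

lemma cdot_hermitian:
  assumes "cadj A = A"
  shows "cdot u (A *v w) = cnj (cdot w (A *v u))"
  by (metis assms cdot_cadj cdot_commute)

lemma cadj_mult: "cadj (A ** B) = cadj B ** cadj (A :: complex^_^_)"
  by (simp add: cadj_def matrix_matrix_mult_def vec_eq_iff cnj_sum mult.commute)

lemma cadj_mat [simp]: "cadj (mat 1 :: complex^'n^'n) = mat 1"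
  by (simp add: cadj_def mat_def vec_eq_iff)

lemma cadj_cadj [simp]: "cadj (cadj A) = (A :: complex^_^_)"
  by (simp add: cadj_def vec_eq_iff)

lemma det_cadj: "det (cadj A) = cnj (det (A :: complex^'n^'n))"
proof -
  have "cadj A = transpose (\<chi> i j. cnj (A $ i $ j))" by (simp add: cadj_def transpose_def)
  hence "det (cadj A) = det (\<chi> i j. cnj (A $ i $ j))" by (simp add: det_transpose)
  thus ?thesis unfolding det_def by (simp add: cnj_sum cnj_prod)
qed

definition herm_pos_def :: "complex^'n^'n \<Rightarrow> bool" where
  "herm_pos_def A \<longleftrightarrow>
     cadj A = A \<and> (\<forall>v. v \<noteq> 0 \<longrightarrow> Im (cdot v (A *v v)) = 0 \<and> Re (cdot v (A *v v)) > 0)"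

lemma HP_complex_iff: "R \<in> HP_complex \<longleftrightarrow> herm_pos_def R \<and> det R = 1"
  unfolding HP_complex_def herm_pos_def_def by auto

lemma herm_pos_def_invertible: "herm_pos_def A \<Longrightarrow> invertible A"
  unfolding herm_pos_def_def
  by (metis invertible_if_kernel_trivial cdot_zero_right zero_complex.simps(1) less_irrefl)

lemma herm_pos_def_matrix_inv:
  assumes "herm_pos_def A" shows "herm_pos_def (matrix_inv A)"
proof -
  have iA: "invertible A" using herm_pos_def_invertible assms by blast
  have "cadj (matrix_inv A) ** A = mat 1"
    using assms unfolding herm_pos_def_def by (metis matrix_mul_matrix_inv(1)[OF iA] cadj_mult cadj_mat)
  hence herm: "cadj (matrix_inv A) = matrix_inv A" using matrix_inv_unique[OF iA] by metis
  have "Im (cdot v (matrix_inv A *v v)) = 0 \<and> Re (cdot v (matrix_inv A *v v)) > 0" if "v \<noteq> 0" for v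
  proof -
    define w where "w = matrix_inv A *v v"
    have v: "A *v w = v" unfolding w_def by (rule matrix_vector_mul_matrix_inv(1)[OF iA])
    hence "w \<noteq> 0" using that by auto
    hence "Im (cdot w (A *v w)) = 0 \<and> Re (cdot w (A *v w)) > 0" using assms herm_pos_def_def by blast
    moreover have "cdot v (matrix_inv A *v v) = cnj (cdot w (A *v w))"
      using cdot_commute[of "A *v w" w] v unfolding w_def by simp
    ultimately show ?thesis by simp
  qed
  thus ?thesis using herm herm_pos_def_def by blast
qed

lemma HP_complex_unimodular_congruence:
  fixes R F :: "complex^'n^'n"
  assumes R: "R \<in> HP_complex" and F: "det F = 1"
  defines "R' \<equiv> matrix_inv (cadj F ** matrix_inv R ** F)"
  shows "R' \<in> HP_complex" "quad_complex R' v = Re (cdot (F *v v) (matrix_inv R *v (F *v v)))"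
proof -
  define S where "S = matrix_inv R"
  have iR: "invertible R" using R herm_pos_def_invertible by (auto simp: HP_complex_iff)
  have S: "herm_pos_def S" "det S = 1"
    using herm_pos_def_matrix_inv det_matrix_inv[OF iR] R unfolding S_def by (auto simp: HP_complex_iff)
  have iF: "invertible F" using F by (simp add: invertible_det_nz)
  define T where "T = cadj F ** S ** F"
  have T_form: "cdot u (T *v u) = cdot (F *v u) (S *v (F *v u))" for u
  proof -
    have "T *v u = cadj F *v (S *v (F *v u))"
      unfolding T_def by (simp add: matrix_vector_mul_assoc matrix_mul_assoc)
    thus ?thesis by (simp add: cdot_cadj)
  qed
  have "herm_pos_def T"
    unfolding herm_pos_def_def
  proof (intro conjI allI impI)
    show "cadj T = T" using S unfolding T_def herm_pos_def_def by (simp add: cadj_mult matrix_mul_assoc)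
    fix u :: "complex^'n" assume "u \<noteq> 0"
    hence "F *v u \<noteq> 0" using matrix_vector_mul_matrix_inv(2)[OF iF, of u] by auto
    thus "Im (cdot u (T *v u)) = 0" "Re (cdot u (T *v u)) > 0" using S herm_pos_def_def T_form by auto
  qed
  moreover have "det T = 1" unfolding T_def by (simp add: det_mul F S det_cadj)
  moreover have iT: "invertible T" using herm_pos_def_invertible \<open>herm_pos_def T\<close> by blast
  moreover have "R' = matrix_inv T" unfolding R'_def T_def S_def ..
  ultimately show "R' \<in> HP_complex"
    by (simp add: HP_complex_iff herm_pos_def_matrix_inv det_matrix_inv)
  show "quad_complex R' v = Re (cdot (F *v v) (matrix_inv R *v (F *v v)))"
    unfolding quad_complex_def \<open>R' = matrix_inv T\<close> matrix_inv_inv[OF iT] T_form S_def ..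
qed

lemma HP_complex_maximizer_minimizes_log_sum:
  fixes x :: "nat \<Rightarrow> complex^'n"
  assumes R: "R \<in> HP_complex" and opt: "\<forall>R'\<in>HP_complex. l_complex N x R' \<le> l_complex N x R"
    and "CARD('n) \<ge> 2" "N \<ge> 1" and "det F = 1"
  shows "(\<Sum>n<N. ln (quad_complex R (x n)))
      \<le> (\<Sum>n<N. ln (Re (cdot (F *v x n) (matrix_inv R *v (F *v x n)))))"
proof -
  define R' where "R' = matrix_inv (cadj F ** matrix_inv R ** F)"
  have "- 2 * (real CARD('n) - 1) / (2 * real N) < 0" using assms by (simp add: divide_neg_pos)
  moreover have "l_complex N x R' \<le> l_complex N x R"
    using opt HP_complex_unimodular_congruence(1)[OF R \<open>det F = 1\<close>] unfolding R'_def by blast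
  ultimately show ?thesis
    using HP_complex_unimodular_congruence(2)[OF R \<open>det F = 1\<close>]
    unfolding l_complex_def R'_def mult_le_cancel_left by simp
qed

lemma has_real_derivative_hermitian_form:
  fixes x a b :: "complex^'n" and \<alpha> \<beta> :: "real \<Rightarrow> complex"
  assumes S: "cadj S = S"
    and \<alpha>: "(\<alpha> has_vector_derivative \<alpha>') (at 0)" "\<alpha> 0 = 0"
    and \<beta>: "(\<beta> has_vector_derivative \<beta>') (at 0)" "\<beta> 0 = 0"
  shows "((\<lambda>t. Re (cdot (x + \<alpha> t *s a + \<beta> t *s b) (S *v (x + \<alpha> t *s a + \<beta> t *s b))))
           has_real_derivative 2 * Re (cnj \<alpha>' * cdot a (S *v x) + cnj \<beta>' * cdot b (S *v x))) (at 0)"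
proof -
  define c where "c u w = cdot u (S *v w)" for u w
  have expand: "cdot (x + \<alpha> t *s a + \<beta> t *s b) (S *v (x + \<alpha> t *s a + \<beta> t *s b))
      = c x x + cnj (\<alpha> t) * c a x + cnj (\<beta> t) * c b x + \<alpha> t * c x a + \<beta> t * c x b
      + cnj (\<alpha> t) * \<alpha> t * c a a + cnj (\<alpha> t) * \<beta> t * c a b + cnj (\<beta> t) * \<alpha> t * c b a
      + cnj (\<beta> t) * \<beta> t * c b b" for t
    unfolding c_def
    by (simp add: cdot_add_left cdot_add_right cdot_scale_left cdot_scale_right
        matrix_vector_right_distrib vector_scalar_commute algebra_simps)
  have quadratic: "((\<lambda>t. f t * g t * k) has_vector_derivative 0) (at 0)"
    if "(f has_vector_derivative f') (at 0)" "(g has_vector_derivative g') (at 0)" "f 0 = 0" "g 0 = 0"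
    for f g :: "real \<Rightarrow> complex" and f' g' k
    using has_vector_derivative_mult_left[OF has_vector_derivative_mult[OF that(1,2)], of k] that(3,4)
    by simp
  note \<alpha>c = has_vector_derivative_cnj[OF \<alpha>(1)] and \<beta>c = has_vector_derivative_cnj[OF \<beta>(1)]
  note lin = has_vector_derivative_mult_left
  have "((\<lambda>t. cdot (x + \<alpha> t *s a + \<beta> t *s b) (S *v (x + \<alpha> t *s a + \<beta> t *s b))) has_vector_derivative
      0 + cnj \<alpha>' * c a x + cnj \<beta>' * c b x + \<alpha>' * c x a + \<beta>' * c x b + 0 + 0 + 0 + 0) (at 0)"
    unfolding expand
    by (intro has_vector_derivative_add has_vector_derivative_const lin[OF \<alpha>c] lin[OF \<beta>c]
        lin[OF \<alpha>(1)] lin[OF \<beta>(1)] quadratic[OF \<alpha>c \<alpha>(1)] quadratic[OF \<alpha>c \<beta>(1)]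
        quadratic[OF \<beta>c \<alpha>(1)] quadratic[OF \<beta>c \<beta>(1)]) (simp_all add: \<alpha>(2) \<beta>(2))
  moreover have "c x a = cnj (c a x)" "c x b = cnj (c b x)"
    unfolding c_def by (rule cdot_hermitian[OF S])+
  ultimately show ?thesis
    unfolding has_vector_derivative_complex_iff c_def by (simp add: add_ac)
qed

lemma HP_complex_first_order_condition:
  fixes x a b :: "nat \<Rightarrow> complex^'n" and F :: "real \<Rightarrow> complex^'n^'n" and \<alpha> \<beta> :: "real \<Rightarrow> complex"
  assumes R: "R \<in> HP_complex" and opt: "\<forall>R'\<in>HP_complex. l_complex N x R' \<le> l_complex N x R"
    and d: "CARD('n) \<ge> 2" and N: "N \<ge> 1" and x: "\<forall>n<N. x n \<noteq> 0"
    and \<delta>: "\<delta> > 0" and F_det: "\<And>t. \<bar>t\<bar> < \<delta> \<Longrightarrow> det (F t) = 1"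
    and F_x: "\<And>t n. \<bar>t\<bar> < \<delta> \<Longrightarrow> F t *v x n = x n + \<alpha> t *s a n + \<beta> t *s b n"
    and \<alpha>: "(\<alpha> has_vector_derivative \<alpha>') (at 0)" "\<alpha> 0 = 0"
    and \<beta>: "(\<beta> has_vector_derivative \<beta>') (at 0)" "\<beta> 0 = 0"
  shows "(\<Sum>n<N. Re (cnj \<alpha>' * cdot (a n) (matrix_inv R *v x n) + cnj \<beta>' * cdot (b n) (matrix_inv R *v x n))
            / quad_complex R (x n)) = 0"
proof -
  define S where "S = matrix_inv R"
  have S: "herm_pos_def S" using R herm_pos_def_matrix_inv unfolding S_def by (auto simp: HP_complex_iff)
  define q where "q n = quad_complex R (x n)" for n
  have q_pos: "q n > 0" if "n < N" for n
    using x that S unfolding q_def quad_complex_def S_def herm_pos_def_def by auto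
  define h where "h n t = Re (cdot (x n + \<alpha> t *s a n + \<beta> t *s b n) (S *v (x n + \<alpha> t *s a n + \<beta> t *s b n)))"
    for n t
  have h_0: "h n 0 = q n" for n by (simp add: h_def q_def quad_complex_def \<alpha>(2) \<beta>(2) S_def)
  have min: "(\<Sum>n<N. ln (h n 0)) \<le> (\<Sum>n<N. ln (h n t))" if "\<bar>0 - t\<bar> < \<delta>" for t
    unfolding h_0 unfolding q_def h_def S_def
    using HP_complex_maximizer_minimizes_log_sum[OF R opt d N F_det] F_x that by simp
  have "(h n has_real_derivative 2 * Re (cnj \<alpha>' * cdot (a n) (S *v x n) + cnj \<beta>' * cdot (b n) (S *v x n))) (at 0)"
    for n
    unfolding h_def using S herm_pos_def_def has_real_derivative_hermitian_form \<alpha> \<beta> by blast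
  hence "((\<lambda>t. \<Sum>n<N. ln (h n t)) has_real_derivative
      (\<Sum>n<N. 2 * Re (cnj \<alpha>' * cdot (a n) (S *v x n) + cnj \<beta>' * cdot (b n) (S *v x n)) / q n)) (at 0)"
    by (intro DERIV_sum) (rule derivative_eq_intros | assumption | simp add: h_0 q_pos)+
  with DERIV_local_min \<delta> min
  have "(\<Sum>n<N. 2 * Re (cnj \<alpha>' * cdot (a n) (S *v x n) + cnj \<beta>' * cdot (b n) (S *v x n)) / q n) = 0"
    by blast
  hence "2 * (\<Sum>n<N. Re (cnj \<alpha>' * cdot (a n) (S *v x n) + cnj \<beta>' * cdot (b n) (S *v x n)) / q n) = 0"
    by (simp add: sum_distrib_left)
  thus ?thesis unfolding q_def S_def by simp
qed

lemma complex_eq_0_if_Re_Im_eq_0: "Re z = 0 \<Longrightarrow> Re (cnj \<i> * z) = 0 \<Longrightarrow> z = (0::complex)"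
  by (simp add: complex_eq_iff)

lemma Re_mult_sum_divide_of_real:
  fixes z :: "nat \<Rightarrow> complex" and r :: "nat \<Rightarrow> real"
  shows "Re (u * (\<Sum>n<N. z n / complex_of_real (r n))) = (\<Sum>n<N. Re (u * z n) / r n)"
  by (simp add: sum_distrib_left Re_sum)

text \<open>The shear and squeeze parameters run along \<open>t w\<close> for \<open>w \<in> {1, \<i>}\<close>, so that both the real and the
  imaginary part of each stationarity condition are obtained.\<close>
lemma HP_complex_maximizer_shear_condition:
  fixes x :: "nat \<Rightarrow> complex^'n"
  assumes R: "R \<in> HP_complex" and opt: "\<forall>R'\<in>HP_complex. l_complex N x R' \<le> l_complex N x R"
    and d: "CARD('n) \<ge> 2" and N: "N \<ge> 1" and x: "\<forall>n<N. x n \<noteq> 0" and "i \<noteq> j"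
  shows "(\<Sum>n<N. cnj (x n $ j) * (matrix_inv R *v x n) $ i / complex_of_real (quad_complex R (x n))) = 0"
proof (rule complex_eq_0_if_Re_Im_eq_0)
  have "Re (cnj w * (\<Sum>n<N. cnj (x n $ j) * (matrix_inv R *v x n) $ i / complex_of_real (quad_complex R (x n))))
      = 0" for w
  proof -
    have "((\<lambda>z. z * w) has_field_derivative w) (at (of_real 0))"
      by (rule derivative_eq_intros refl | simp)+
    from has_vector_derivative_real_field[OF this]
    have lin: "((\<lambda>t. complex_of_real t * w) has_vector_derivative w) (at 0)" by simp
    have "(\<Sum>n<N. Re (cnj w * cdot ((x n $ j) *s axis i 1) (matrix_inv R *v x n)
                      + cnj 0 * cdot 0 (matrix_inv R *v x n)) / quad_complex R (x n)) = 0"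
    proof (rule HP_complex_first_order_condition[OF R opt d N x,
          where \<delta> = 1 and F = "\<lambda>t. shear_matrix i j (complex_of_real t * w)"])
      fix t :: real and n
      show "det (shear_matrix i j (complex_of_real t * w)) = 1" using \<open>i \<noteq> j\<close> by (rule det_shear_matrix)
      show "shear_matrix i j (complex_of_real t * w) *v x n
          = x n + (complex_of_real t * w) *s ((x n $ j) *s axis i 1) + 0 *s 0"
        by (simp add: shear_matrix_mult_vector)
    qed (auto intro: lin)
    thus ?thesis
      by (simp only: Re_mult_sum_divide_of_real cdot_axis complex_cnj_zero mult_zero_left add_0_right)
  qed
  from this[of 1] this[of \<i>] show "Re (\<Sum>n<N. cnj (x n $ j) * (matrix_inv R *v x n) $ i / complex_of_real (quad_complex R (x n))) = 0"
    and "Re (cnj \<i> * (\<Sum>n<N. cnj (x n $ j) * (matrix_inv R *v x n) $ i / complex_of_real (quad_complex R (x n)))) = 0"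
    by simp_all
qed

lemma HP_complex_maximizer_squeeze_condition:
  fixes x :: "nat \<Rightarrow> complex^'n"
  assumes R: "R \<in> HP_complex" and opt: "\<forall>R'\<in>HP_complex. l_complex N x R' \<le> l_complex N x R"
    and d: "CARD('n) \<ge> 2" and N: "N \<ge> 1" and x: "\<forall>n<N. x n \<noteq> 0" and ij: "i \<noteq> j"
  shows "(\<Sum>n<N. (cnj (x n $ i) * (matrix_inv R *v x n) $ i - cnj (x n $ j) * (matrix_inv R *v x n) $ j)
           / complex_of_real (quad_complex R (x n))) = 0"
proof (rule complex_eq_0_if_Re_Im_eq_0)
  have "Re (cnj w * (\<Sum>n<N. (cnj (x n $ i) * (matrix_inv R *v x n) $ i - cnj (x n $ j) * (matrix_inv R *v x n) $ j)
           / complex_of_real (quad_complex R (x n)))) = 0" if w: "cmod w \<le> 1" for w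
  proof -
    have "((\<lambda>z. z * w) has_field_derivative w) (at (of_real 0))"
      by (rule derivative_eq_intros refl | simp)+
    from has_vector_derivative_real_field[OF this]
    have lin: "((\<lambda>t. complex_of_real t * w) has_vector_derivative w) (at 0)" by simp
    have "((\<lambda>z. 1 / (1 + z * w) - 1) has_field_derivative - w) (at (of_real 0))"
      by (rule derivative_eq_intros refl | simp)+
    from has_vector_derivative_real_field[OF this]
    have inv: "((\<lambda>t. 1 / (1 + complex_of_real t * w) - 1) has_vector_derivative - w) (at 0)" by simp
    have "(\<Sum>n<N. Re (cnj w * cdot ((x n $ i) *s axis i 1) (matrix_inv R *v x n)
                      + cnj (- w) * cdot ((x n $ j) *s axis j 1) (matrix_inv R *v x n)) / quad_complex R (x n)) = 0"
    proof (rule HP_complex_first_order_condition[OF R opt d N x,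
          where \<delta> = "1/2" and F = "\<lambda>t. squeeze_matrix i j (1 + complex_of_real t * w)"
            and \<beta> = "\<lambda>t. 1 / (1 + complex_of_real t * w) - 1"])
      fix t :: real and n assume "\<bar>t\<bar> < 1/2"
      hence "cmod (complex_of_real t * w) < 1"
        using w mult_left_le[of "cmod w" "\<bar>t\<bar>"] by (simp add: norm_mult)
      hence "1 + complex_of_real t * w \<noteq> 0"
        by (metis add.inverse_unique norm_minus_cancel norm_one less_irrefl)
      thus "det (squeeze_matrix i j (1 + complex_of_real t * w)) = 1" by (rule det_squeeze_matrix[OF ij])
      show "squeeze_matrix i j (1 + complex_of_real t * w) *v x n = x n
          + (complex_of_real t * w) *s (x n $ i *s axis i 1)
          + (1 / (1 + complex_of_real t * w) - 1) *s (x n $ j *s axis j 1)"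
        by (simp add: squeeze_matrix_mult_vector[OF ij])
    qed (auto intro: lin inv)
    thus ?thesis
      by (simp only: Re_mult_sum_divide_of_real cdot_axis complex_cnj_minus mult_minus_left
          diff_conv_add_uminus distrib_left mult_minus_right)
  qed
  from this[of 1] this[of \<i>]
  show "Re (\<Sum>n<N. (cnj (x n $ i) * (matrix_inv R *v x n) $ i - cnj (x n $ j) * (matrix_inv R *v x n) $ j)
           / complex_of_real (quad_complex R (x n))) = 0"
    and "Re (cnj \<i> * (\<Sum>n<N. (cnj (x n $ i) * (matrix_inv R *v x n) $ i - cnj (x n $ j) * (matrix_inv R *v x n) $ j)
           / complex_of_real (quad_complex R (x n)))) = 0"
    by simp_all
qed

lemma tyler_sum_mult_hermitian:
  fixes x :: "nat \<Rightarrow> complex^'n" and S :: "complex^'n^'n" and q :: "nat \<Rightarrow> real"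
  assumes "cadj S = S"
  shows "((\<Sum>n<N. (1 / q n) *\<^sub>R outer_complex (x n)) ** S) $ j $ k
       = cnj (\<Sum>n<N. cnj (x n $ j) * (S *v x n) $ k / complex_of_real (q n))"
proof -
  have S: "cnj (S $ k $ l) = S $ l $ k" for l by (metis assms cadj_def vec_lambda_beta)
  have "((\<Sum>n<N. (1 / q n) *\<^sub>R outer_complex (x n)) ** S) $ j $ k
      = (\<Sum>l\<in>UNIV. \<Sum>n<N. ((1 / q n) *\<^sub>R (x n $ j * cnj (x n $ l))) * S $ l $ k)"
    by (simp add: matrix_matrix_mult_def outer_complex_def sum_distrib_right)
  also have "\<dots> = (\<Sum>n<N. \<Sum>l\<in>UNIV. x n $ j * (cnj (x n $ l) * S $ l $ k) / complex_of_real (q n))"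
    by (subst sum.swap) (intro sum.cong refl, simp add: scaleR_conv_of_real divide_inverse mult_ac)
  also have "\<dots> = cnj (\<Sum>n<N. cnj (x n $ j) * (S *v x n) $ k / complex_of_real (q n))"
    by (simp add: cnj_sum matrix_vector_mult_def S sum_distrib_left sum_divide_distrib mult_ac)
  finally show ?thesis .
qed

lemma trace_tyler_sum_mult_inverse_complex:
  fixes x :: "nat \<Rightarrow> complex^'n"
  assumes x: "\<forall>n<N. x n \<noteq> 0" and S: "herm_pos_def (matrix_inv R)"
  shows "trace ((\<Sum>n<N. (1 / quad_complex R (x n)) *\<^sub>R outer_complex (x n)) ** matrix_inv R) = of_nat N"
proof -
  define S where "S = matrix_inv R"
  have herm: "cadj S = S" using S unfolding herm_pos_def_def S_def by simp
  have "trace ((\<Sum>n<N. (1 / quad_complex R (x n)) *\<^sub>R outer_complex (x n)) ** S)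
      = cnj (\<Sum>n<N. cdot (x n) (S *v x n) / complex_of_real (quad_complex R (x n)))"
    unfolding trace_def tyler_sum_mult_hermitian[OF herm] cdot_def
    by (simp only: cnj_sum[symmetric] sum_divide_distrib, subst sum.swap, rule refl)
  also have "\<dots> = of_nat N"
  proof -
    have "cdot (x n) (S *v x n) = complex_of_real (quad_complex R (x n))" if "n < N" for n
      using x S that by (simp add: complex_eq_iff herm_pos_def_def quad_complex_def flip: S_def)
    moreover have "quad_complex R (x n) \<noteq> 0" if "n < N" for n
      using x S that by (fastforce simp: herm_pos_def_def quad_complex_def simp flip: S_def)
    ultimately have "(\<Sum>n<N. cdot (x n) (S *v x n) / complex_of_real (quad_complex R (x n))) = (\<Sum>n<N. 1)"
      by (intro sum.cong) auto
    thus ?thesis by simp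
  qed
  finally show ?thesis unfolding S_def .
qed

theorem tyler_fixed_point_complex:
  fixes x :: "nat \<Rightarrow> complex^'n"
  assumes R: "R \<in> HP_complex" and opt: "\<forall>R'\<in>HP_complex. l_complex N x R' \<le> l_complex N x R"
    and d: "CARD('n) \<ge> 2" and N: "N \<ge> 1" and x: "\<forall>n<N. x n \<noteq> 0"
  shows "R = (real CARD('n) / real N) *\<^sub>R (\<Sum>n<N. (1 / quad_complex R (x n)) *\<^sub>R outer_complex (x n))"
proof -
  define S where "S = matrix_inv R"
  have iR: "invertible R" using R herm_pos_def_invertible by (auto simp: HP_complex_iff)
  have S: "herm_pos_def S" using R herm_pos_def_matrix_inv unfolding S_def by (auto simp: HP_complex_iff)
  define M where "M = (\<Sum>n<N. (1 / quad_complex R (x n)) *\<^sub>R outer_complex (x n))"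
  define Z where "Z j k = (\<Sum>n<N. cnj (x n $ j) * (S *v x n) $ k / complex_of_real (quad_complex R (x n)))"
    for j k
  have MS: "(M ** S) $ j $ k = cnj (Z j k)" for j k
    unfolding M_def Z_def using S by (simp add: tyler_sum_mult_hermitian herm_pos_def_def)
  have "(M ** S) $ j $ k = 0" if "j \<noteq> k" for j k
    using HP_complex_maximizer_shear_condition[OF R opt d N x that[symmetric]]
    by (simp add: MS Z_def flip: S_def)
  moreover have "(M ** S) $ j $ j = (M ** S) $ k $ k" for j k
  proof (cases "j = k")
    case False
    thus ?thesis using HP_complex_maximizer_squeeze_condition[OF R opt d N x False]
      by (simp add: MS Z_def diff_divide_distrib sum_subtractf flip: S_def)
  qed simp
  ultimately have "M ** S = mat (trace (M ** S) / of_nat CARD('n))"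
    by (rule scalar_matrix_eq_mat_trace)
  also have "trace (M ** S) = of_nat N"
    unfolding M_def S_def using x S[unfolded S_def] by (rule trace_tyler_sum_mult_inverse_complex)
  finally have "M ** S = mat (of_real (real N / real CARD('n)))" by simp
  hence "M = (real N / real CARD('n)) *\<^sub>R R"
    using mat_of_real_mult[of "real N / real CARD('n)" R] matrix_mul_matrix_inv(2)[OF iR]
    by (metis S_def matrix_mul_assoc matrix_mul_rid)
  thus ?thesis using N unfolding M_def by simp
qed

theorem mainTheorem1:
  assumes "CARD('n) \<ge> 2" and "N \<ge> 1"
  shows
   "(\<forall>(x :: nat \<Rightarrow> real^'n) (Rs :: real^'n^'n).
       (\<forall>n<N. x n \<noteq> 0) \<and> Rs \<in> HP_real \<and> (\<forall>R\<in>HP_real. l_real N x R \<le> l_real N x Rs)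
       \<longrightarrow> (\<exists>c>0. Rs = c *\<^sub>R (\<Sum>n<N. (1 / quad_real Rs (x n)) *\<^sub>R outer_real (x n))))
  \<and> (\<forall>(x :: nat \<Rightarrow> complex^'n) (Rs :: complex^'n^'n).
       (\<forall>n<N. x n \<noteq> 0) \<and> Rs \<in> HP_complex \<and> (\<forall>R\<in>HP_complex. l_complex N x R \<le> l_complex N x Rs)
       \<longrightarrow> (\<exists>c>0. Rs = c *\<^sub>R (\<Sum>n<N. (1 / quad_complex Rs (x n)) *\<^sub>R outer_complex (x n))))"
proof -
  have c: "real CARD('n) / real N > 0" using assms by simp
  show ?thesis
    using tyler_fixed_point_real[OF _ _ assms] tyler_fixed_point_complex[OF _ _ assms] c by blast
qed

end
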